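(* Under the standing hypotheses ($N\ge2$, $l\ge2$, $\sigma\in\mathfrak S_{N,l}$, $J\in\{1,\dots,N\}^k$ nonperiodic, $f\in\mathrm{BFS}_N(\Lambda)$ is $P(J)$, and $\Lambda(p)$ is defined for each $p\in Q_J$ as below): (a) If $\Lambda_0\subset\Lambda$ is such that $f^{(\sigma)}$ restricts to a branching function system on $\Lambda_0$ and $f^{(\sigma)}|_{\Lambda_0}$ is $P(T)$ for some word $T$, then there is $p\in Q_J$ with $\Lambda_0=\Lambda(p)$. (b) For $p,p'\in Q_J$, $p\sim p'$ if and only if $\Lambda(p)=\Lambda(p')$.
   Context: Branching function systems: for an infinite set $\Lambda$, $f=\{f_i\}_{i=1}^N\in\mathrm{BFS}_N(\Lambda)$ means each $f_i$ is injective on $\Lambda$ and $f_1(\Lambda),\dots,f_N(\Lambda)$ partition $\Lambda$. $f_J=f_{j_1}\circ\cdots\circ f_{j_k}$ for $J=(j_1,\dots,j_k)$, $f_0=\mathrm{id}$. $x\sim y$ iff $f_{J_1}(z)=x$, $f_{J_2}(z)=y$ for some words $J_1,J_2$ (possibly empty) and $z$; $A_f(x)=\{y:x\sim y\}$; $f$ is cyclic if $\Lambda=A_f(x)$ for some $x$. $f$ is $P(J)$ ($J=(j_1,\dots,j_k)$) if $f$ is cyclic and there are distinct $n_1,\dots,n_k$ with $f_{j_1}(n_1)=n_k$, $f_{j_2}(n_2)=n_1,\dots,f_{j_k}(n_k)=n_{k-1}$. Restriction $f|_{\Lambda_0}$ is taken when $f_i(\Lambda_0)\subset\Lambda_0$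 and these images partition $\Lambda_0$. For $\sigma\in\mathfrak S_{N,l}$ (permutations of $\{1,\dots,N\}^l$), $f^{(\sigma)}_i(f_K(n))=f_{\sigma(i,K)}(n)$ for $K\in\{1,\dots,N\}^{l-1}$. $J$ nonperiodic: not an $r$-fold concatenation of a word with $r\ge2$. Semi-Mealy machine by $\sigma$: states $q_K$ ($K\in\{1,\dots,N\}^{l-1}$), inputs $a_i$, outputs $b_i$; with $\sigma^{-1}(K,i)=(y_1,\dots,y_l)$, $\delta(q_K,a_i)=q_{(y_2,\dots,y_l)}$, $\lambda(q_K,a_i)=b_{y_1}$, extended to words by $\delta(q,wa)=\delta(\delta(q,w),a)$, $\lambda(q,wa)=\lambda(q,w)\lambda(\delta(q,w),a)$; $a_J=a_{j_1}\cdots a_{j_k}$. $Q_J=\{q:\delta(q,(a_J)^n)=q$ for some $n\ge1\}$, $q\sim q'$ iff $\delta(q,(a_J)^n)=q'$ for some $n\ge1$, $[q]$ its class. Definition of $\Lambda(p)$: let $n_0$ be the unique point with $f_J(n_0)=n_0$. For $p\in Q_J$ let $r=\#[p]$, $\alpha=rk$, extend $J$ periodically ($j_{k(c-1)+i}=j_i$), set $p_1=p$, $p_i=\delta(p_{i-1},a_{j_{i-1}})$ ($2\le i\le\alpha$), write $p_\alpha=q_{I_\alpha}$, let $m(p)=f_{(I_\alpha,j_\alpha)}(n_0)$ and $\Lambda(p)=A_{f^{(\sigma)}}(m(p))$. *)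

theory Defs
  imports Main
begin

definition words :: "nat \<Rightarrow> nat \<Rightarrow> nat list set" where
  "words N m = {w. length w = m \<and> set w \<subseteq> {1..N}}"

primrec fword :: "(nat \<Rightarrow> 'a \<Rightarrow> 'a) \<Rightarrow> nat list \<Rightarrow> 'a \<Rightarrow> 'a" where
  "fword f [] = id"
| "fword f (j # J) = f j \<circ> fword f J"

definition BFS :: "nat \<Rightarrow> 'a set \<Rightarrow> (nat \<Rightarrow> 'a \<Rightarrow> 'a) \<Rightarrow> bool" where
  "BFS N \<Lambda> f \<longleftrightarrow> infinite \<Lambda>
     \<and> (\<forall>i\<in>{1..N}. inj_on (f i) \<Lambda> \<and> f i ` \<Lambda> \<subseteq> \<Lambda>)
     \<and> (\<forall>i\<in>{1..N}. \<forall>j\<in>{1..N}. i \<noteq> j \<longrightarrow> f i ` \<Lambda> \<inter> f j ` \<Lambda> = {})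
     \<and> (\<Union>i\<in>{1..N}. f i ` \<Lambda>) = \<Lambda>"

definition frel :: "nat \<Rightarrow> 'a set \<Rightarrow> (nat \<Rightarrow> 'a \<Rightarrow> 'a) \<Rightarrow> 'a \<Rightarrow> 'a \<Rightarrow> bool" where
  "frel N \<Lambda> f x y \<longleftrightarrow> (\<exists>J1 J2 z. set J1 \<subseteq> {1..N} \<and> set J2 \<subseteq> {1..N} \<and> z \<in> \<Lambda>
       \<and> fword f J1 z = x \<and> fword f J2 z = y)"

definition Aorb :: "nat \<Rightarrow> 'a set \<Rightarrow> (nat \<Rightarrow> 'a \<Rightarrow> 'a) \<Rightarrow> 'a \<Rightarrow> 'a set" where
  "Aorb N \<Lambda> f x = {y. frel N \<Lambda> f x y}"

definition cyclic :: "nat \<Rightarrow> 'a set \<Rightarrow> (nat \<Rightarrow> 'a \<Rightarrow> 'a) \<Rightarrow> bool" where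
  "cyclic N \<Lambda> f \<longleftrightarrow> (\<exists>x\<in>\<Lambda>. \<Lambda> = Aorb N \<Lambda> f x)"

definition isP :: "nat \<Rightarrow> 'a set \<Rightarrow> (nat \<Rightarrow> 'a \<Rightarrow> 'a) \<Rightarrow> nat list \<Rightarrow> bool" where
  "isP N \<Lambda> f J \<longleftrightarrow> cyclic N \<Lambda> f \<and>
     (\<exists>n :: nat \<Rightarrow> 'a. inj_on n {1..length J} \<and> n ` {1..length J} \<subseteq> \<Lambda> \<and>
        (\<forall>i\<in>{1..length J}. f (J ! (i - 1)) (n i) = n (if i = 1 then length J else i - 1)))"

definition nonperiodic :: "nat list \<Rightarrow> bool" where
  "nonperiodic J \<longleftrightarrow> \<not> (\<exists>w r. r \<ge> 2 \<and> J = concat (replicate r w))"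

text \<open>f^(sigma)_i (f_K(n)) = f_{sigma(i,K)}(n), K of length l-1, n in Lambda.
  sigma acts on words of length l; (i,K) is the word i # K.\<close>
definition fsig :: "nat \<Rightarrow> nat \<Rightarrow> 'a set \<Rightarrow> (nat \<Rightarrow> 'a \<Rightarrow> 'a) \<Rightarrow> (nat list \<Rightarrow> nat list)
                     \<Rightarrow> nat \<Rightarrow> 'a \<Rightarrow> 'a" where
  "fsig N l \<Lambda> f \<sigma> i x =
     (case (THE (K, n). K \<in> words N (l - 1) \<and> n \<in> \<Lambda> \<and> fword f K n = x) of
        (K, n) \<Rightarrow> fword f (\<sigma> (i # K)) n)"

text \<open>Transition function of the semi-Mealy machine: states q_K are identified with K;
  with sigma^{-1}(K,i) = (y_1,...,y_l), delta(q_K, a_i) = q_{(y_2,...,y_l)}.\<close>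
definition delta :: "nat \<Rightarrow> nat \<Rightarrow> (nat list \<Rightarrow> nat list) \<Rightarrow> nat list \<Rightarrow> nat \<Rightarrow> nat list" where
  "delta N l \<sigma> K i = tl (inv_into (words N l) \<sigma> (K @ [i]))"

definition deltas :: "nat \<Rightarrow> nat \<Rightarrow> (nat list \<Rightarrow> nat list) \<Rightarrow> nat list \<Rightarrow> nat list \<Rightarrow> nat list" where
  "deltas N l \<sigma> K w = foldl (delta N l \<sigma>) K w"

definition Jpow :: "nat list \<Rightarrow> nat \<Rightarrow> nat list" where
  "Jpow J n = concat (replicate n J)"

definition QJ :: "nat \<Rightarrow> nat \<Rightarrow> (nat list \<Rightarrow> nat list) \<Rightarrow> nat list \<Rightarrow> nat list set" where
  "QJ N l \<sigma> J = {K \<in> words N (l - 1). \<exists>n\<ge>1. deltas N l \<sigma> K (Jpow J n) = K}"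

definition qrel :: "nat \<Rightarrow> nat \<Rightarrow> (nat list \<Rightarrow> nat list) \<Rightarrow> nat list \<Rightarrow> nat list \<Rightarrow> nat list \<Rightarrow> bool" where
  "qrel N l \<sigma> J K K' \<longleftrightarrow> (\<exists>n\<ge>1. deltas N l \<sigma> K (Jpow J n) = K')"

definition qcls :: "nat \<Rightarrow> nat \<Rightarrow> (nat list \<Rightarrow> nat list) \<Rightarrow> nat list \<Rightarrow> nat list \<Rightarrow> nat list set" where
  "qcls N l \<sigma> J K = {K'. qrel N l \<sigma> J K K'}"

definition nzero :: "'a set \<Rightarrow> (nat \<Rightarrow> 'a \<Rightarrow> 'a) \<Rightarrow> nat list \<Rightarrow> 'a" where
  "nzero \<Lambda> f J = (THE x. x \<in> \<Lambda> \<and> fword f J x = x)"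

text \<open>m(p) = f_{(I_alpha, j_alpha)}(n_0), where alpha = r k, r = #[p],
  p_alpha = delta(p, a_{j_1} ... a_{j_{alpha-1}}) = q_{I_alpha} and j_alpha = j_k.\<close>
definition mpt :: "nat \<Rightarrow> nat \<Rightarrow> 'a set \<Rightarrow> (nat \<Rightarrow> 'a \<Rightarrow> 'a) \<Rightarrow> (nat list \<Rightarrow> nat list)
                    \<Rightarrow> nat list \<Rightarrow> nat list \<Rightarrow> 'a" where
  "mpt N l \<Lambda> f \<sigma> J p =
     (let r = card (qcls N l \<sigma> J p);
          Ialpha = deltas N l \<sigma> p (butlast (Jpow J r))
      in fword f (Ialpha @ [last J]) (nzero \<Lambda> f J))"

definition LamP :: "nat \<Rightarrow> nat \<Rightarrow> 'a set \<Rightarrow> (nat \<Rightarrow> 'a \<Rightarrow> 'a) \<Rightarrow> (nat list \<Rightarrow> nat list)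
                    \<Rightarrow> nat list \<Rightarrow> nat list \<Rightarrow> 'a set" where
  "LamP N l \<Lambda> f \<sigma> J p = Aorb N \<Lambda> (fsig N l \<Lambda> f \<sigma>) (mpt N l \<Lambda> f \<sigma> J p)"

end

theory Submission
  imports Defs
begin

(* A branching function system is a forest: every point x has a unique parent z with
   f_i(z) = x, and x ~ y says that x and y have a common ancestor, i.e. some iterates of
   the parent map agree on them.  Writing points as f_K(m) with |K| = l - 1, the system
   f^(sigma) is again branching, and its parent map sends f_K(f_i(m)) to f_delta(K,i)(m):
   climbing the forest of f^(sigma) runs the semi-Mealy machine.  As f is P(J) with J
   nonperiodic, f_J has a unique fixed point n_0, every point has an ancestor of the form
   f_K(n_0), and running the machine along J from K eventually reaches Q_J.  Two points
   f_K(n_0), f_K'(n_0) have a common ancestor iff delta(K, J^a) = delta(K', J^b) for some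
   a, b, because nonperiodicity forbids climbing by a proper part of J; on Q_J this is
   p ~ p'.  Finally the parent of m(p) is f_delta(p, J^r)(n_0), an ancestor of f_p(n_0),
   so Lambda(p) is the orbit of f_p(n_0). *)

lemma funpow_eventually_periodic:
  assumes "finite (range (\<lambda>n. (g ^^ n) x))"
  obtains a n where "n > 0" and "(g ^^ n) ((g ^^ a) x) = (g ^^ a) x"
proof -
  have "\<not> inj (\<lambda>n. (g ^^ n) x)"
    using assms finite_imageD infinite_UNIV_nat by blast
  then obtain a b where "a < b" and "(g ^^ a) x = (g ^^ b) x"
    unfolding inj_def by (metis linorder_neqE_nat)
  then have "(g ^^ (b - a)) ((g ^^ a) x) = (g ^^ a) x"
    by (metis comp_apply funpow_add le_add_diff_inverse2 less_imp_le)
  with \<open>a < b\<close> show thesis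
    using that[of "b - a" a] by simp
qed

lemma funpow_reaches_periodic_point:
  assumes "(g ^^ n) y = y" and "n > 0" and "(g ^^ a) x = (g ^^ b) y"
  shows "\<exists>m>0. (g ^^ m) x = y"
proof -
  define c where "c = n * Suc b - b"
  have per: "(g ^^ (n * Suc b)) y = y"
    using funpow_mod_eq[OF assms(1), of "n * Suc b"] by simp
  have "Suc b \<le> n * Suc b"
    using assms(2) mult_le_mono1[of 1 n "Suc b"] by simp
  then have split: "n * Suc b = c + b" and "c > 0"
    unfolding c_def by linarith+
  have "(g ^^ c) ((g ^^ a) x) = y"
    unfolding assms(3) using per split by (metis comp_apply funpow_add)
  with \<open>c > 0\<close> show ?thesis
    by (metis add_gr_0 comp_apply funpow_add)
qed

lemma funpow_eq_mult_shift:
  assumes "(g ^^ a) x = (g ^^ b) y" and "k > 0"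
  obtains q t where "t < k" and "(g ^^ (k * a)) x = (g ^^ t) ((g ^^ (k * q)) y)"
proof -
  define s where "s = k * a - a + b"
  have "k * a = (k * a - a) + a"
    using assms(2) by simp
  then have "(g ^^ (k * a)) x = (g ^^ s) y"
    unfolding s_def by (metis assms(1) comp_apply funpow_add)
  also have "\<dots> = (g ^^ (s mod k)) ((g ^^ (k * (s div k))) y)"
    by (metis comp_apply funpow_add mod_mult_div_eq)
  finally show thesis
    using that[of "s mod k" "s div k"] assms(2) by simp
qed

definition tail_equiv :: "('a \<Rightarrow> 'a) \<Rightarrow> 'a \<Rightarrow> 'a \<Rightarrow> bool" where
  "tail_equiv p x y \<longleftrightarrow> (\<exists>a b. (p ^^ a) x = (p ^^ b) y)"

lemma tail_equiv_refl: "tail_equiv p x x"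
  unfolding tail_equiv_def by blast

lemma tail_equiv_sym: "tail_equiv p x y \<Longrightarrow> tail_equiv p y x"
  unfolding tail_equiv_def by metis

lemma tail_equiv_trans:
  assumes "tail_equiv p x y" and "tail_equiv p y z"
  shows "tail_equiv p x z"
proof -
  obtain a b where ab: "(p ^^ a) x = (p ^^ b) y"
    using assms(1) unfolding tail_equiv_def by blast
  obtain c d where cd: "(p ^^ c) y = (p ^^ d) z"
    using assms(2) unfolding tail_equiv_def by blast
  have "(p ^^ (c + a)) x = (p ^^ (c + b)) y"
    by (simp add: funpow_add ab)
  also have "\<dots> = (p ^^ (b + d)) z"
    by (simp add: add.commute[of c b] funpow_add cd)
  finally have "(p ^^ (c + a)) x = (p ^^ (b + d)) z" .
  then show ?thesis
    unfolding tail_equiv_def by blast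
qed

lemma tail_equiv_cong:
  assumes "tail_equiv p x x'" and "tail_equiv p y y'"
  shows "tail_equiv p x y \<longleftrightarrow> tail_equiv p x' y'"
  using assms by (blast intro: tail_equiv_sym tail_equiv_trans)

lemma tail_equiv_funpow: "tail_equiv p x ((p ^^ n) x)"
  unfolding tail_equiv_def by (metis funpow_0)

lemma finite_words: "finite (words N n)"
  using finite_lists_length_eq[of "{1..N}" n] unfolding words_def by (simp add: conj_commute)

lemma nonperiodic_Nil: "\<not> nonperiodic []"
  unfolding nonperiodic_def by (metis concat_replicate_trivial order_refl)

lemma nonperiodic_rotation:
  assumes "nonperiodic J" and "t < length J" and "J @ drop t J = drop t J @ J"
  shows "t = 0"
proof -
  obtain m n w where J: "concat (replicate m w) = J" and "concat (replicate n w) = drop t J"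
    using comm_append_are_replicate[OF assms(3)] by blast
  have "m < 2"
    using assms(1) J unfolding nonperiodic_def by (metis not_less)
  moreover have "m \<noteq> 0"
  proof
    assume "m = 0"
    with J assms(2) show False
      by auto
  qed
  ultimately have "w = J"
    using J by (simp add: numeral_2_eq_2 less_Suc_eq)
  with \<open>concat (replicate n w) = drop t J\<close>
  have "length (concat (replicate n J)) = length (drop t J)"
    by simp
  then have "length J - t = n * length J"
    by (simp add: length_concat sum_list_replicate)
  with assms(2) show ?thesis
    by (cases n) auto
qed

lemma set_Jpow: "set J \<subseteq> A \<Longrightarrow> set (Jpow J a) \<subseteq> A"
  unfolding Jpow_def by (induction a) auto

lemma length_Jpow: "length (Jpow J a) = a * length J"
  unfolding Jpow_def by (induction a) auto

lemma last_Jpow: "a > 0 \<Longrightarrow> last (Jpow J a) = last J"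
  unfolding Jpow_def by (induction a) (auto simp: last_append)

lemma fword_append: "fword f (u @ v) = fword f u \<circ> fword f v"
  by (induction u) auto

lemma fword_Jpow_fixed: "fword f J x = x \<Longrightarrow> fword f (Jpow J a) x = x"
  unfolding Jpow_def by (induction a) (auto simp: fword_append)

lemma fword_take_drop: "fword f (take t J) (fword f (drop t J) x) = fword f J x"
  by (metis append_take_drop_id comp_apply fword_append)

lemma BFSI:
  assumes "infinite \<Lambda>"
    and "\<And>i z. i \<in> {1..N} \<Longrightarrow> z \<in> \<Lambda> \<Longrightarrow> f i z \<in> \<Lambda>"
    and "\<And>i j z w. i \<in> {1..N} \<Longrightarrow> j \<in> {1..N} \<Longrightarrow> z \<in> \<Lambda> \<Longrightarrow> w \<in> \<Lambda> \<Longrightarrow>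
           f i z = f j w \<Longrightarrow> i = j \<and> z = w"
    and "\<And>x. x \<in> \<Lambda> \<Longrightarrow> \<exists>i\<in>{1..N}. \<exists>z\<in>\<Lambda>. f i z = x"
  shows "BFS N \<Lambda> f"
  unfolding BFS_def inj_on_def using assms by fast

definition parent :: "nat \<Rightarrow> 'a set \<Rightarrow> (nat \<Rightarrow> 'a \<Rightarrow> 'a) \<Rightarrow> 'a \<Rightarrow> 'a" where
  "parent N \<Lambda> f x = (SOME z. z \<in> \<Lambda> \<and> (\<exists>i\<in>{1..N}. f i z = x))"

locale branching_system =
  fixes N :: nat and \<Lambda> :: "'a set" and f :: "nat \<Rightarrow> 'a \<Rightarrow> 'a"
  assumes bfs: "BFS N \<Lambda> f"
begin

lemma f_in: "i \<in> {1..N} \<Longrightarrow> z \<in> \<Lambda> \<Longrightarrow> f i z \<in> \<Lambda>"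
  using bfs unfolding BFS_def by blast

lemma exists_preimage:
  assumes "x \<in> \<Lambda>"
  shows "\<exists>i\<in>{1..N}. \<exists>z\<in>\<Lambda>. f i z = x"
proof -
  have "x \<in> (\<Union>i\<in>{1..N}. f i ` \<Lambda>)"
    using bfs assms unfolding BFS_def by simp
  then show ?thesis
    by blast
qed

lemma f_eq_iff:
  assumes "i \<in> {1..N}" "j \<in> {1..N}" and "z \<in> \<Lambda>" "w \<in> \<Lambda>"
  shows "f i z = f j w \<longleftrightarrow> i = j \<and> z = w"
proof
  assume eq: "f i z = f j w"
  have "i = j"
  proof (rule ccontr)
    assume "i \<noteq> j"
    then have "f i ` \<Lambda> \<inter> f j ` \<Lambda> = {}"
      using bfs assms(1,2) unfolding BFS_def by blast
    moreover have "f i z \<in> f i ` \<Lambda> \<inter> f j ` \<Lambda>"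
      using eq assms(3,4) by blast
    ultimately show False
      by blast
  qed
  moreover have "inj_on (f i) \<Lambda>"
    using bfs assms(1) unfolding BFS_def by blast
  ultimately show "i = j \<and> z = w"
    using eq assms(3,4) by (auto dest: inj_onD)
qed simp

lemma fword_in: "z \<in> \<Lambda> \<Longrightarrow> set W \<subseteq> {1..N} \<Longrightarrow> fword f W z \<in> \<Lambda>"
  by (induction W) (auto simp: f_in)

lemma parent_in_and_preimage:
  assumes "x \<in> \<Lambda>"
  shows "parent N \<Lambda> f x \<in> \<Lambda> \<and> (\<exists>i\<in>{1..N}. f i (parent N \<Lambda> f x) = x)"
  using someI_ex[of "\<lambda>z. z \<in> \<Lambda> \<and> (\<exists>i\<in>{1..N}. f i z = x)"] exists_preimage[OF assms]
  unfolding parent_def by blast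

lemma parent_apply: "i \<in> {1..N} \<Longrightarrow> z \<in> \<Lambda> \<Longrightarrow> parent N \<Lambda> f (f i z) = z"
  using parent_in_and_preimage[OF f_in] f_eq_iff f_in by metis

lemma funpow_parent_in: "x \<in> \<Lambda> \<Longrightarrow> (parent N \<Lambda> f ^^ n) x \<in> \<Lambda>"
  by (induction n) (auto simp: parent_in_and_preimage)

lemma funpow_parent_fword:
  "z \<in> \<Lambda> \<Longrightarrow> set W \<subseteq> {1..N} \<Longrightarrow> (parent N \<Lambda> f ^^ length W) (fword f W z) = z"
  by (induction W) (auto simp: funpow_Suc_right parent_apply fword_in simp del: funpow.simps)

lemma fword_funpow_parent:
  "x \<in> \<Lambda> \<Longrightarrow> \<exists>W\<in>words N n. fword f W ((parent N \<Lambda> f ^^ n) x) = x"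
proof (induction n arbitrary: x)
  case 0
  then show ?case
    by (auto simp: words_def)
next
  case (Suc n)
  obtain i where i: "i \<in> {1..N}" "f i (parent N \<Lambda> f x) = x"
    using parent_in_and_preimage[OF Suc.prems] by blast
  obtain W where "W \<in> words N n"
    and "fword f W ((parent N \<Lambda> f ^^ n) (parent N \<Lambda> f x)) = parent N \<Lambda> f x"
    using Suc.IH parent_in_and_preimage[OF Suc.prems] by blast
  with i show ?case
    by (intro bexI[of _ "i # W"]) (auto simp: words_def funpow_Suc_right simp del: funpow.simps)
qed

lemma fword_words_surj: "x \<in> \<Lambda> \<Longrightarrow> \<exists>K\<in>words N n. \<exists>m\<in>\<Lambda>. fword f K m = x"
  using fword_funpow_parent funpow_parent_in by blast

lemma fword_words_inj:
  "K \<in> words N n \<Longrightarrow> K' \<in> words N n \<Longrightarrow> m \<in> \<Lambda> \<Longrightarrow> m' \<in> \<Lambda> \<Longrightarrow>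
    fword f K m = fword f K' m' \<Longrightarrow> K = K' \<and> m = m'"
proof (induction K arbitrary: K' n)
  case Nil
  then show ?case
    by (simp add: words_def)
next
  case (Cons i K)
  then obtain j K'' n' where K': "K' = j # K''" and n: "n = Suc n'"
    unfolding words_def by (cases K') auto
  with Cons.prems have w: "i \<in> {1..N}" "j \<in> {1..N}" "K \<in> words N n'" "K'' \<in> words N n'"
    unfolding words_def by auto
  with Cons.prems have "fword f K m \<in> \<Lambda>" "fword f K'' m' \<in> \<Lambda>"
    using fword_in unfolding words_def by auto
  with Cons.prems K' w have "i = j" "fword f K m = fword f K'' m'"
    using f_eq_iff by auto
  with Cons.IH[OF w(3,4) Cons.prems(3,4)] K' show ?case
    by simp
qed

lemma frel_iff_tail_equiv:
  "frel N \<Lambda> f x y \<longleftrightarrow> x \<in> \<Lambda> \<and> y \<in> \<Lambda> \<and> tail_equiv (parent N \<Lambda> f) x y"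
proof
  assume "frel N \<Lambda> f x y"
  then obtain W1 W2 z where W: "set W1 \<subseteq> {1..N}" "set W2 \<subseteq> {1..N}" "z \<in> \<Lambda>"
    and x: "fword f W1 z = x" and y: "fword f W2 z = y"
    unfolding frel_def by blast
  have "(parent N \<Lambda> f ^^ length W1) x = z" "(parent N \<Lambda> f ^^ length W2) y = z"
    using funpow_parent_fword[OF W(3) W(1)] funpow_parent_fword[OF W(3) W(2)] x y by simp_all
  then have "tail_equiv (parent N \<Lambda> f) x y"
    unfolding tail_equiv_def by (intro exI[of _ "length W1"] exI[of _ "length W2"]) simp
  moreover have "x \<in> \<Lambda>" "y \<in> \<Lambda>"
    using fword_in[OF W(3)] W(1,2) x y by auto
  ultimately show "x \<in> \<Lambda> \<and> y \<in> \<Lambda> \<and> tail_equiv (parent N \<Lambda> f) x y"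
    by blast
next
  assume "x \<in> \<Lambda> \<and> y \<in> \<Lambda> \<and> tail_equiv (parent N \<Lambda> f) x y"
  then obtain a b where xy: "x \<in> \<Lambda>" "y \<in> \<Lambda>"
    and ab: "(parent N \<Lambda> f ^^ a) x = (parent N \<Lambda> f ^^ b) y"
    unfolding tail_equiv_def by blast
  define z where "z = (parent N \<Lambda> f ^^ b) y"
  obtain W1 where W1: "W1 \<in> words N a" "fword f W1 z = x"
    using fword_funpow_parent[OF xy(1)] ab unfolding z_def by metis
  obtain W2 where W2: "W2 \<in> words N b" "fword f W2 z = y"
    using fword_funpow_parent[OF xy(2)] unfolding z_def by blast
  have "z \<in> \<Lambda>"
    using funpow_parent_in[OF xy(2)] unfolding z_def .
  with W1 W2 show "frel N \<Lambda> f x y"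
    unfolding frel_def words_def by blast
qed

lemma Aorb_eq_iff_tail_equiv:
  assumes "x \<in> \<Lambda>" and "y \<in> \<Lambda>"
  shows "Aorb N \<Lambda> f x = Aorb N \<Lambda> f y \<longleftrightarrow> tail_equiv (parent N \<Lambda> f) x y"
proof
  assume "Aorb N \<Lambda> f x = Aorb N \<Lambda> f y"
  moreover have "y \<in> Aorb N \<Lambda> f y"
    using assms(2) tail_equiv_refl by (simp add: Aorb_def frel_iff_tail_equiv)
  ultimately show "tail_equiv (parent N \<Lambda> f) x y"
    using assms(1) unfolding Aorb_def frel_iff_tail_equiv by blast
next
  assume "tail_equiv (parent N \<Lambda> f) x y"
  then show "Aorb N \<Lambda> f x = Aorb N \<Lambda> f y"
    using assms unfolding Aorb_def frel_iff_tail_equiv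
    by (blast intro: tail_equiv_trans tail_equiv_sym)
qed

lemma fword_in_subsystemD:
  assumes "BFS N \<Lambda>0 f" and "\<Lambda>0 \<subseteq> \<Lambda>"
  shows "z \<in> \<Lambda> \<Longrightarrow> set W \<subseteq> {1..N} \<Longrightarrow> fword f W z \<in> \<Lambda>0 \<Longrightarrow> z \<in> \<Lambda>0"
proof (induction W)
  case (Cons i W)
  then have "i \<in> {1..N}" "fword f W z \<in> \<Lambda>" "f i (fword f W z) \<in> \<Lambda>0"
    using fword_in by auto
  then have "fword f W z \<in> \<Lambda>0"
    using branching_system.exists_preimage[OF branching_system.intro[OF assms(1)]] f_eq_iff assms(2) by (metis subsetD)
  with Cons show ?case
    by simp
qed simp

lemma Aorb_subsystem:
  assumes "BFS N \<Lambda>0 f" and "\<Lambda>0 \<subseteq> \<Lambda>" and "x \<in> \<Lambda>0"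
  shows "Aorb N \<Lambda>0 f x = Aorb N \<Lambda> f x"
proof -
  have "frel N \<Lambda>0 f x y \<longleftrightarrow> frel N \<Lambda> f x y" for y
  proof
    assume "frel N \<Lambda>0 f x y"
    with assms(2) show "frel N \<Lambda> f x y"
      unfolding frel_def by blast
  next
    assume "frel N \<Lambda> f x y"
    then obtain W1 W2 z where W: "set W1 \<subseteq> {1..N}" "set W2 \<subseteq> {1..N}" "z \<in> \<Lambda>"
      and x: "fword f W1 z = x" and y: "fword f W2 z = y"
      unfolding frel_def by blast
    have "z \<in> \<Lambda>0"
      using fword_in_subsystemD[OF assms(1,2) W(3,1)] x assms(3) by simp
    with W x y show "frel N \<Lambda>0 f x y"
      unfolding frel_def by blast
  qed
  then show ?thesis
    unfolding Aorb_def by blast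
qed

end

lemma deltas_append: "deltas N l \<sigma> K (u @ v) = deltas N l \<sigma> (deltas N l \<sigma> K u) v"
  unfolding deltas_def by simp

lemma deltas_Jpow: "deltas N l \<sigma> K (Jpow J n) = ((\<lambda>K. deltas N l \<sigma> K J) ^^ n) K"
  by (induction n arbitrary: K) (simp_all add: Jpow_def deltas_def funpow_Suc_right del: funpow.simps)

lemma QJ_iff:
  "K \<in> QJ N l \<sigma> J \<longleftrightarrow> K \<in> words N (l - 1) \<and> (\<exists>n>0. ((\<lambda>K. deltas N l \<sigma> K J) ^^ n) K = K)"
  unfolding QJ_def deltas_Jpow by (auto simp: Suc_le_eq)

lemma qrel_iff_common_iterate:
  assumes "p' \<in> QJ N l \<sigma> J"
  shows "qrel N l \<sigma> J p p' \<longleftrightarrow> (\<exists>a b. deltas N l \<sigma> p (Jpow J a) = deltas N l \<sigma> p' (Jpow J b))"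
proof
  assume "qrel N l \<sigma> J p p'"
  then obtain n where "deltas N l \<sigma> p (Jpow J n) = p'"
    unfolding qrel_def by blast
  then have "deltas N l \<sigma> p (Jpow J n) = deltas N l \<sigma> p' (Jpow J 0)"
    by (simp add: Jpow_def deltas_def)
  then show "\<exists>a b. deltas N l \<sigma> p (Jpow J a) = deltas N l \<sigma> p' (Jpow J b)"
    by blast
next
  assume "\<exists>a b. deltas N l \<sigma> p (Jpow J a) = deltas N l \<sigma> p' (Jpow J b)"
  then obtain a b where ab: "((\<lambda>K. deltas N l \<sigma> K J) ^^ a) p = ((\<lambda>K. deltas N l \<sigma> K J) ^^ b) p'"
    unfolding deltas_Jpow by blast
  obtain n where n: "n > 0" "((\<lambda>K. deltas N l \<sigma> K J) ^^ n) p' = p'"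
    using assms unfolding QJ_iff by blast
  then show "qrel N l \<sigma> J p p'"
    using funpow_reaches_periodic_point[OF n(2,1) ab]
    unfolding qrel_def deltas_Jpow by (auto simp: Suc_le_eq)
qed

locale word_permutation =
  fixes N l :: nat and \<sigma> :: "nat list \<Rightarrow> nat list"
  assumes l_ge_2: "l \<ge> 2"
    and \<sigma>_bij: "bij_betw \<sigma> (words N l) (words N l)"
begin

lemma Cons_words: "i \<in> {1..N} \<Longrightarrow> K \<in> words N (l - 1) \<Longrightarrow> i # K \<in> words N l"
  using l_ge_2 unfolding words_def by auto

lemma snoc_words: "K \<in> words N (l - 1) \<Longrightarrow> i \<in> {1..N} \<Longrightarrow> K @ [i] \<in> words N l"
  using l_ge_2 unfolding words_def by auto

lemma inv_into_\<sigma>_Cons: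
  assumes "Y \<in> words N l"
  obtains i K where "i \<in> {1..N}" and "K \<in> words N (l - 1)"
    and "inv_into (words N l) \<sigma> Y = i # K" and "\<sigma> (i # K) = Y"
proof -
  define Y0 where "Y0 = inv_into (words N l) \<sigma> Y"
  have Y0: "Y0 \<in> words N l"
    unfolding Y0_def using bij_betw_apply[OF bij_betw_inv_into[OF \<sigma>_bij] assms] .
  then obtain i K where iK: "Y0 = i # K"
    using l_ge_2 unfolding words_def by (cases Y0) auto
  with Y0 have "i \<in> {1..N}" "K \<in> words N (l - 1)"
    unfolding words_def by auto
  moreover have "\<sigma> (i # K) = Y"
    using bij_betw_inv_into_right[OF \<sigma>_bij assms] iK unfolding Y0_def by simp
  ultimately show thesis
    using that iK unfolding Y0_def by blast
qed

lemma delta_words: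
  assumes "K \<in> words N (l - 1)" and "i \<in> {1..N}"
  shows "delta N l \<sigma> K i \<in> words N (l - 1)"
  using inv_into_\<sigma>_Cons[OF snoc_words[OF assms]] unfolding delta_def by (metis list.sel(3))

lemma \<sigma>_Cons_delta:
  assumes "K \<in> words N (l - 1)" and "i \<in> {1..N}"
  obtains j where "j \<in> {1..N}" and "\<sigma> (j # delta N l \<sigma> K i) = K @ [i]"
  using inv_into_\<sigma>_Cons[OF snoc_words[OF assms]] unfolding delta_def by (metis list.sel(3))

lemma deltas_words:
  "K \<in> words N (l - 1) \<Longrightarrow> set w \<subseteq> {1..N} \<Longrightarrow> deltas N l \<sigma> K w \<in> words N (l - 1)"
proof (induction w arbitrary: K)
  case (Cons i w)
  then show ?case
    using delta_words[of K i] by (simp add: deltas_def)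
qed (simp add: deltas_def)

lemma deltas_Jpow_in_QJ:
  assumes "set J \<subseteq> {1..N}" and "K \<in> words N (l - 1)"
  obtains a where "deltas N l \<sigma> K (Jpow J a) \<in> QJ N l \<sigma> J"
proof -
  let ?step = "\<lambda>K. deltas N l \<sigma> K J"
  have orbit: "(?step ^^ n) K \<in> words N (l - 1)" for n
    using deltas_words[OF assms(2) set_Jpow[OF assms(1)]] unfolding deltas_Jpow .
  then have "range (\<lambda>n. (?step ^^ n) K) \<subseteq> words N (l - 1)"
    by blast
  then have "finite (range (\<lambda>n. (?step ^^ n) K))"
    using finite_words finite_subset by blast
  then obtain a n where "n > 0" "(?step ^^ n) ((?step ^^ a) K) = (?step ^^ a) K"
    by (rule funpow_eventually_periodic)
  with orbit[of a] show thesis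
    using that[of a] unfolding QJ_iff deltas_Jpow by blast
qed

end

locale permuted_system = word_permutation N l \<sigma> + branching_system N \<Lambda> f
  for N l :: nat and \<sigma> :: "nat list \<Rightarrow> nat list" and \<Lambda> :: "'a set" and f :: "nat \<Rightarrow> 'a \<Rightarrow> 'a"
begin

abbreviation fs :: "nat \<Rightarrow> 'a \<Rightarrow> 'a" where
  "fs \<equiv> fsig N l \<Lambda> f \<sigma>"

abbreviation ps :: "'a \<Rightarrow> 'a" where
  "ps \<equiv> parent N \<Lambda> fs"

lemma fsig_fword:
  assumes "K \<in> words N (l - 1)" and "m \<in> \<Lambda>"
  shows "fs i (fword f K m) = fword f (\<sigma> (i # K)) m"
proof -
  have "(THE (K', m'). K' \<in> words N (l - 1) \<and> m' \<in> \<Lambda> \<and> fword f K' m' = fword f K m) = (K, m)"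
    by (rule the_equality) (use assms fword_words_inj in auto)
  then show ?thesis
    unfolding fsig_def by simp
qed

lemma fword_\<sigma>_in:
  assumes "i \<in> {1..N}" and "K \<in> words N (l - 1)" and "m \<in> \<Lambda>"
  shows "\<sigma> (i # K) \<in> words N l" and "fword f (\<sigma> (i # K)) m \<in> \<Lambda>"
proof -
  show w: "\<sigma> (i # K) \<in> words N l"
    using bij_betw_apply[OF \<sigma>_bij Cons_words[OF assms(1,2)]] .
  then show "fword f (\<sigma> (i # K)) m \<in> \<Lambda>"
    using fword_in[OF assms(3)] unfolding words_def by blast
qed

lemma BFS_fsig: "BFS N \<Lambda> fs"
proof (rule BFSI)
  show "infinite \<Lambda>"
    using bfs unfolding BFS_def by blast
next
  fix i z assume "i \<in> {1..N}" and "z \<in> \<Lambda>"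
  then obtain K m where "K \<in> words N (l - 1)" "m \<in> \<Lambda>" "fword f K m = z"
    using fword_words_surj by blast
  then show "fs i z \<in> \<Lambda>"
    using fsig_fword fword_\<sigma>_in \<open>i \<in> {1..N}\<close> by metis
next
  fix i j z w
  assume ij: "i \<in> {1..N}" "j \<in> {1..N}" and "z \<in> \<Lambda>" "w \<in> \<Lambda>" and eq: "fs i z = fs j w"
  obtain K m where K: "K \<in> words N (l - 1)" "m \<in> \<Lambda>" "fword f K m = z"
    using fword_words_surj[OF \<open>z \<in> \<Lambda>\<close>] by blast
  obtain K' m' where K': "K' \<in> words N (l - 1)" "m' \<in> \<Lambda>" "fword f K' m' = w"
    using fword_words_surj[OF \<open>w \<in> \<Lambda>\<close>] by blast
  have "fword f (\<sigma> (i # K)) m = fword f (\<sigma> (j # K')) m'"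
    using eq K K' fsig_fword by metis
  then have "\<sigma> (i # K) = \<sigma> (j # K')" and "m = m'"
    using fword_words_inj[OF fword_\<sigma>_in(1)[OF ij(1) K(1,2)] fword_\<sigma>_in(1)[OF ij(2) K'(1,2)] K(2) K'(2)]
    by auto
  then have "i # K = j # K'"
    using \<sigma>_bij Cons_words[OF ij(1) K(1)] Cons_words[OF ij(2) K'(1)]
    unfolding bij_betw_def inj_on_def by blast
  with K K' \<open>m = m'\<close> show "i = j \<and> z = w"
    by blast
next
  fix x assume "x \<in> \<Lambda>"
  then obtain Y m where Y: "Y \<in> words N l" "m \<in> \<Lambda>" "fword f Y m = x"
    using fword_words_surj by blast
  obtain i K where iK: "i \<in> {1..N}" "K \<in> words N (l - 1)" "\<sigma> (i # K) = Y"
    using inv_into_\<sigma>_Cons[OF Y(1)] by blast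
  have "fs i (fword f K m) = x"
    using fsig_fword[OF iK(2) Y(2)] iK(3) Y(3) by simp
  moreover have "fword f K m \<in> \<Lambda>"
    using fword_in[OF Y(2)] iK(2) unfolding words_def by blast
  ultimately show "\<exists>i\<in>{1..N}. \<exists>z\<in>\<Lambda>. fs i z = x"
    using iK(1) by blast
qed

sublocale sig: branching_system N \<Lambda> fs
  by unfold_locales (rule BFS_fsig)

lemma psig_fword_snoc:
  assumes "K \<in> words N (l - 1)" and "i \<in> {1..N}" and "m \<in> \<Lambda>"
  shows "ps (fword f K (f i m)) = fword f (delta N l \<sigma> K i) m"
proof -
  obtain j where j: "j \<in> {1..N}" and \<sigma>j: "\<sigma> (j # delta N l \<sigma> K i) = K @ [i]"
    using \<sigma>_Cons_delta[OF assms(1,2)] .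
  have d: "delta N l \<sigma> K i \<in> words N (l - 1)"
    using delta_words[OF assms(1,2)] .
  have "fword f K (f i m) = fs j (fword f (delta N l \<sigma> K i) m)"
    using fsig_fword[OF d assms(3)] \<sigma>j by (simp add: fword_append)
  moreover have "fword f (delta N l \<sigma> K i) m \<in> \<Lambda>"
    using fword_in[OF assms(3)] d unfolding words_def by blast
  ultimately show ?thesis
    using sig.parent_apply[OF j] by simp
qed

lemma funpow_psig_fword:
  "set w \<subseteq> {1..N} \<Longrightarrow> K \<in> words N (l - 1) \<Longrightarrow> m \<in> \<Lambda> \<Longrightarrow>
    (ps ^^ length w) (fword f K (fword f w m)) = fword f (deltas N l \<sigma> K w) m"
proof (induction w arbitrary: K)
  case (Cons i w)
  then have "(ps ^^ length (i # w)) (fword f K (fword f (i # w) m))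
      = (ps ^^ length w) (fword f (delta N l \<sigma> K i) (fword f w m))"
    using psig_fword_snoc[of K i "fword f w m"] fword_in
    by (simp add: funpow_Suc_right del: funpow.simps)
  also have "\<dots> = fword f (deltas N l \<sigma> K (i # w)) m"
    using Cons delta_words[of K i] by (simp add: deltas_def)
  finally show ?case .
qed (simp add: deltas_def)

end

locale P_system = branching_system N \<Lambda> f
  for N :: nat and \<Lambda> :: "'a set" and f :: "nat \<Rightarrow> 'a \<Rightarrow> 'a" +
  fixes J :: "nat list"
  assumes J_set: "set J \<subseteq> {1..N}"
    and J_nonperiodic: "nonperiodic J"
    and J_P: "isP N \<Lambda> f J"
begin

abbreviation n0 :: 'a where
  "n0 \<equiv> nzero \<Lambda> f J"

lemma J_ne: "J \<noteq> []"
  using J_nonperiodic nonperiodic_Nil by blast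

lemma drop_J_in: "x \<in> \<Lambda> \<Longrightarrow> fword f (drop t J) x \<in> \<Lambda>"
  using fword_in J_set by (meson in_set_dropD subset_iff)

lemma fixed_point_exists: "\<exists>c\<in>\<Lambda>. fword f J c = c"
proof -
  define k where "k = length J"
  obtain n :: "nat \<Rightarrow> 'a" where n: "n ` {1..k} \<subseteq> \<Lambda>"
    and cycle: "\<And>i. i \<in> {1..k} \<Longrightarrow> f (J ! (i - 1)) (n i) = n (if i = 1 then k else i - 1)"
    using J_P unfolding isP_def k_def by blast
  have "k \<ge> 1"
    using J_ne unfolding k_def by (simp add: Suc_le_eq)
  have "fword f (take i J) (n i) = n k" if "1 \<le> i" and "i \<le> k" for i
    using that
  proof (induction i rule: nat_induct_at_least)
    case base
    then show ?case
      using cycle[of 1] J_ne by (cases J) auto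
  next
    case (Suc i)
    then have "take (Suc i) J = take i J @ [J ! i]"
      unfolding k_def by (simp add: take_Suc_conv_app_nth)
    moreover have "f (J ! i) (n (Suc i)) = n i"
      using cycle[of "Suc i"] Suc.hyps Suc.prems by simp
    ultimately show ?case
      using Suc by (simp add: fword_append)
  qed
  from this[of k] have "fword f J (n k) = n k"
    using \<open>k \<ge> 1\<close> unfolding k_def by simp
  moreover have "n k \<in> \<Lambda>"
    using n \<open>k \<ge> 1\<close> by auto
  ultimately show ?thesis
    by blast
qed

lemma funpow_parent_fixed:
  assumes "x \<in> \<Lambda>" and "fword f J x = x" and "t \<le> length J"
  shows "(parent N \<Lambda> f ^^ t) x = fword f (drop t J) x"
proof -
  have "set (take t J) \<subseteq> {1..N}"
    using J_set by (meson in_set_takeD subset_iff)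
  then have "(parent N \<Lambda> f ^^ length (take t J)) x = fword f (drop t J) x"
    using funpow_parent_fword[OF drop_J_in[OF assms(1)]] assms(2) fword_take_drop by metis
  then show ?thesis
    using assms(3) by simp
qed

lemma tail_equiv_cyclic:
  assumes "x \<in> \<Lambda>" and "y \<in> \<Lambda>"
  shows "tail_equiv (parent N \<Lambda> f) x y"
proof -
  obtain x0 where "x0 \<in> \<Lambda>" and "\<Lambda> = Aorb N \<Lambda> f x0"
    using J_P unfolding isP_def cyclic_def by blast
  then have "tail_equiv (parent N \<Lambda> f) x0 x" and "tail_equiv (parent N \<Lambda> f) x0 y"
    using assms unfolding Aorb_def frel_iff_tail_equiv by blast+
  then show ?thesis
    using tail_equiv_sym tail_equiv_trans by metis
qed

text \<open>Here nonperiodicity of \<open>J\<close> enters: \<open>f\<^sub>J\<close> and \<open>f\<^bsub>drop t J\<^esub>\<close> would commute on \<open>x\<close>,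
  so \<open>J\<close> would commute with its proper suffix \<open>drop t J\<close>.\<close>
lemma fixed_drop_fixed:
  assumes "x \<in> \<Lambda>" and "fword f J x = x" and "t < length J"
    and "fword f J (fword f (drop t J) x) = fword f (drop t J) x"
  shows "t = 0"
proof -
  have "fword f (J @ drop t J) x = fword f (drop t J @ J) x"
    using assms(2,4) by (simp add: fword_append)
  moreover have "J @ drop t J \<in> words N (length J + (length J - t))"
    and "drop t J @ J \<in> words N (length J + (length J - t))"
    using J_set unfolding words_def by (auto dest: in_set_dropD)
  ultimately have "J @ drop t J = drop t J @ J"
    using fword_words_inj assms(1) by blast
  then show ?thesis
    using nonperiodic_rotation[OF J_nonperiodic assms(3)] by blast
qed

lemma fixed_point_unique:
  assumes "x \<in> \<Lambda>" and "fword f J x = x" and "y \<in> \<Lambda>" and "fword f J y = y"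
  shows "x = y"
proof -
  have per: "(parent N \<Lambda> f ^^ length J) z = z" if "z \<in> \<Lambda>" and "fword f J z = z" for z
    using funpow_parent_fixed[OF that] by simp
  obtain a b where "(parent N \<Lambda> f ^^ a) x = (parent N \<Lambda> f ^^ b) y"
    using tail_equiv_cyclic[OF assms(1,3)] unfolding tail_equiv_def by blast
  then obtain m where "(parent N \<Lambda> f ^^ m) x = y"
    using funpow_reaches_periodic_point[OF per[OF assms(3,4)]] J_ne by blast
  then have "y = fword f (drop (m mod length J) J) x"
    using funpow_mod_eq[OF per[OF assms(1,2)]] funpow_parent_fixed[OF assms(1,2)] J_ne
    by (metis less_imp_le_nat length_greater_0_conv mod_less_divisor)
  moreover from this have "m mod length J = 0"
    using fixed_drop_fixed[OF assms(1,2)] assms(4) J_ne by simp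
  ultimately show ?thesis
    using assms(2) by simp
qed

lemma nzero: "n0 \<in> \<Lambda>" "fword f J n0 = n0"
proof -
  have "\<exists>!x. x \<in> \<Lambda> \<and> fword f J x = x"
    using fixed_point_exists fixed_point_unique by blast
  then show "n0 \<in> \<Lambda>" "fword f J n0 = n0"
    using theI'[of "\<lambda>x. x \<in> \<Lambda> \<and> fword f J x = x"] unfolding nzero_def by blast+
qed

lemma fword_drop_nzero:
  assumes "t < length J" and "fword f (drop t J) n0 = n0"
  shows "t = 0"
  using fixed_drop_fixed[OF nzero assms(1)] assms(2) nzero(2) by simp

lemma fword_nzero_surj:
  assumes "m \<in> \<Lambda>"
  obtains W where "set W \<subseteq> {1..N}" and "fword f W n0 = m"
proof -
  obtain a b where ab: "(parent N \<Lambda> f ^^ a) m = (parent N \<Lambda> f ^^ b) n0"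
    using tail_equiv_cyclic[OF assms nzero(1)] unfolding tail_equiv_def by blast
  have "(parent N \<Lambda> f ^^ length J) n0 = n0"
    using funpow_parent_fixed[OF nzero order_refl] by simp
  then obtain u where "(parent N \<Lambda> f ^^ u) m = n0"
    using funpow_reaches_periodic_point[OF _ _ ab] J_ne by blast
  moreover obtain W where W: "W \<in> words N u" and "fword f W ((parent N \<Lambda> f ^^ u) m) = m"
    using fword_funpow_parent[OF assms, of u] by blast
  ultimately have "fword f W n0 = m"
    by simp
  with W show thesis
    using that unfolding words_def by blast
qed

end

locale permuted_P_system = permuted_system N l \<sigma> \<Lambda> f + P_system N \<Lambda> f J
  for N l :: nat and \<sigma> :: "nat list \<Rightarrow> nat list" and \<Lambda> :: "'a set" and f :: "nat \<Rightarrow> 'a \<Rightarrow> 'a"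
    and J :: "nat list"
begin

lemma funpow_psig_Jpow:
  assumes "K \<in> words N (l - 1)"
  shows "(ps ^^ (a * length J)) (fword f K n0) = fword f (deltas N l \<sigma> K (Jpow J a)) n0"
  using funpow_psig_fword[OF set_Jpow[OF J_set] assms nzero(1), of a]
  by (simp add: fword_Jpow_fixed[OF nzero(2)] length_Jpow)

text \<open>Climbing \<open>t < |J|\<close> steps from \<open>f\<^sub>K(n\<^sub>0)\<close> runs the machine along \<open>take t J\<close> and
  leads to \<open>f\<^sub>K\<^sub>'(f\<^bsub>drop t J\<^esub>(n\<^sub>0))\<close>; unique decoding then forces
  \<open>f\<^bsub>drop t J\<^esub>(n\<^sub>0) = n\<^sub>0\<close>, hence \<open>t = 0\<close>.\<close>
lemma fword_nzero_eq_funpow_psig: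
  assumes K1: "K1 \<in> words N (l - 1)" and K2: "K2 \<in> words N (l - 1)"
    and "t < length J" and eq: "fword f K1 n0 = (ps ^^ t) (fword f K2 n0)"
  shows "t = 0" and "K1 = K2"
proof -
  define m where "m = fword f (drop t J) n0"
  have take_t: "set (take t J) \<subseteq> {1..N}" "length (take t J) = t"
    using J_set \<open>t < length J\<close> by (auto dest: in_set_takeD)
  have "m \<in> \<Lambda>"
    unfolding m_def using drop_J_in[OF nzero(1)] .
  have "n0 = fword f (take t J) m"
    unfolding m_def using nzero(2) fword_take_drop by metis
  then have "fword f K1 n0 = fword f (deltas N l \<sigma> K2 (take t J)) m"
    using eq funpow_psig_fword[OF take_t(1) K2 \<open>m \<in> \<Lambda>\<close>] take_t(2) by simp
  then have "n0 = m" and K1_eq: "K1 = deltas N l \<sigma> K2 (take t J)"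
    using fword_words_inj[OF K1 deltas_words[OF K2 take_t(1)] nzero(1) \<open>m \<in> \<Lambda>\<close>] by auto
  then show "t = 0"
    using fword_drop_nzero \<open>t < length J\<close> unfolding m_def by simp
  with K1_eq show "K1 = K2"
    by (simp add: deltas_def)
qed

lemma tail_equiv_fword_nzero_iff:
  assumes K: "K \<in> words N (l - 1)" and K': "K' \<in> words N (l - 1)"
  shows "tail_equiv ps (fword f K n0) (fword f K' n0) \<longleftrightarrow>
    (\<exists>a b. deltas N l \<sigma> K (Jpow J a) = deltas N l \<sigma> K' (Jpow J b))"
proof
  assume "tail_equiv ps (fword f K n0) (fword f K' n0)"
  then obtain a b where ab: "(ps ^^ a) (fword f K n0) = (ps ^^ b) (fword f K' n0)"
    unfolding tail_equiv_def by blast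
  have "length J > 0"
    using J_ne by simp
  then obtain q t where "t < length J"
    and "(ps ^^ (length J * a)) (fword f K n0) = (ps ^^ t) ((ps ^^ (length J * q)) (fword f K' n0))"
    by (rule funpow_eq_mult_shift[OF ab])
  then have "t < length J" and "fword f (deltas N l \<sigma> K (Jpow J a)) n0
      = (ps ^^ t) (fword f (deltas N l \<sigma> K' (Jpow J q)) n0)"
    using funpow_psig_Jpow[OF K, of a] funpow_psig_Jpow[OF K', of q] by (simp_all add: mult.commute)
  then have "deltas N l \<sigma> K (Jpow J a) = deltas N l \<sigma> K' (Jpow J q)"
    using fword_nzero_eq_funpow_psig(2) deltas_words[OF _ set_Jpow[OF J_set]] K K' by blast
  then show "\<exists>a b. deltas N l \<sigma> K (Jpow J a) = deltas N l \<sigma> K' (Jpow J b)"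
    by blast
next
  assume "\<exists>a b. deltas N l \<sigma> K (Jpow J a) = deltas N l \<sigma> K' (Jpow J b)"
  then obtain a b where "deltas N l \<sigma> K (Jpow J a) = deltas N l \<sigma> K' (Jpow J b)"
    by blast
  then have "(ps ^^ (a * length J)) (fword f K n0) = (ps ^^ (b * length J)) (fword f K' n0)"
    using funpow_psig_Jpow[OF K] funpow_psig_Jpow[OF K'] by simp
  then show "tail_equiv ps (fword f K n0) (fword f K' n0)"
    unfolding tail_equiv_def by blast
qed

lemma card_qcls_pos:
  assumes "p \<in> QJ N l \<sigma> J"
  shows "card (qcls N l \<sigma> J p) > 0"
proof -
  have "qcls N l \<sigma> J p \<subseteq> words N (l - 1)"
    using assms deltas_words[OF _ set_Jpow[OF J_set]]
    unfolding qcls_def qrel_def QJ_def by blast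
  then have "finite (qcls N l \<sigma> J p)"
    using finite_words finite_subset by blast
  moreover have "p \<in> qcls N l \<sigma> J p"
    using assms unfolding qcls_def qrel_def QJ_def by blast
  ultimately show ?thesis
    using card_gt_0_iff by blast
qed

lemma mpt_tail_equiv:
  assumes p: "p \<in> QJ N l \<sigma> J"
  shows "mpt N l \<Lambda> f \<sigma> J p \<in> \<Lambda>" and "tail_equiv ps (mpt N l \<Lambda> f \<sigma> J p) (fword f p n0)"
proof -
  define r where "r = card (qcls N l \<sigma> J p)"
  define I where "I = deltas N l \<sigma> p (butlast (Jpow J r))"
  have pw: "p \<in> words N (l - 1)"
    using p unfolding QJ_def by blast
  have "r > 0"
    using card_qcls_pos[OF p] unfolding r_def .
  then have "Jpow J r \<noteq> []"
    using J_ne length_Jpow[of J r] by (metis length_0_conv mult_is_0 not_gr0)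
  then have Jpow_snoc: "Jpow J r = butlast (Jpow J r) @ [last J]"
    using last_Jpow[OF \<open>r > 0\<close>] by (metis append_butlast_last_id)
  have I: "I \<in> words N (l - 1)"
    unfolding I_def using deltas_words[OF pw] set_Jpow[OF J_set] by (meson in_set_butlastD subset_iff)
  have lastJ: "last J \<in> {1..N}"
    using J_set J_ne last_in_set by blast
  have mpt: "mpt N l \<Lambda> f \<sigma> J p = fword f I (f (last J) n0)"
    unfolding mpt_def Let_def I_def r_def by (simp add: fword_append)
  show "mpt N l \<Lambda> f \<sigma> J p \<in> \<Lambda>"
    unfolding mpt using fword_in[OF f_in[OF lastJ nzero(1)]] I unfolding words_def by blast
  have "ps (mpt N l \<Lambda> f \<sigma> J p) = fword f (delta N l \<sigma> I (last J)) n0"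
    unfolding mpt using psig_fword_snoc[OF I lastJ nzero(1)] .
  also have "delta N l \<sigma> I (last J) = deltas N l \<sigma> p (Jpow J r)"
    unfolding I_def by (subst Jpow_snoc) (simp add: deltas_append deltas_def)
  also have "fword f \<dots> n0 = (ps ^^ (r * length J)) (fword f p n0)"
    using funpow_psig_Jpow[OF pw] by simp
  finally have "(ps ^^ 1) (mpt N l \<Lambda> f \<sigma> J p) = (ps ^^ (r * length J)) (fword f p n0)"
    by simp
  then show "tail_equiv ps (mpt N l \<Lambda> f \<sigma> J p) (fword f p n0)"
    unfolding tail_equiv_def by blast
qed

lemma exists_QJ_tail_equiv:
  assumes "x \<in> \<Lambda>"
  obtains p where "p \<in> QJ N l \<sigma> J" and "tail_equiv ps x (fword f p n0)"
proof -
  obtain K m where K: "K \<in> words N (l - 1)" and "m \<in> \<Lambda>" and x: "fword f K m = x"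
    using fword_words_surj[OF assms] by blast
  obtain W where W: "set W \<subseteq> {1..N}" and m: "fword f W n0 = m"
    using fword_nzero_surj[OF \<open>m \<in> \<Lambda>\<close>] by blast
  define K1 where "K1 = deltas N l \<sigma> K W"
  have K1: "K1 \<in> words N (l - 1)"
    unfolding K1_def using deltas_words[OF K W] .
  obtain a where p: "deltas N l \<sigma> K1 (Jpow J a) \<in> QJ N l \<sigma> J"
    using deltas_Jpow_in_QJ[OF J_set K1] by blast
  have "(ps ^^ length W) x = fword f K1 n0"
    using funpow_psig_fword[OF W K nzero(1)] x m unfolding K1_def by simp
  moreover have "(ps ^^ (a * length J)) (fword f K1 n0) = fword f (deltas N l \<sigma> K1 (Jpow J a)) n0"
    using funpow_psig_Jpow[OF K1] .
  ultimately have "tail_equiv ps x (fword f (deltas N l \<sigma> K1 (Jpow J a)) n0)"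
    using tail_equiv_funpow tail_equiv_trans by metis
  with p show thesis
    using that by blast
qed

lemma LamP_eq_iff_qrel:
  assumes p: "p \<in> QJ N l \<sigma> J" and p': "p' \<in> QJ N l \<sigma> J"
  shows "LamP N l \<Lambda> f \<sigma> J p = LamP N l \<Lambda> f \<sigma> J p' \<longleftrightarrow> qrel N l \<sigma> J p p'"
proof -
  have words: "p \<in> words N (l - 1)" "p' \<in> words N (l - 1)"
    using p p' unfolding QJ_def by blast+
  have "LamP N l \<Lambda> f \<sigma> J p = LamP N l \<Lambda> f \<sigma> J p'
      \<longleftrightarrow> tail_equiv ps (mpt N l \<Lambda> f \<sigma> J p) (mpt N l \<Lambda> f \<sigma> J p')"
    unfolding LamP_def using sig.Aorb_eq_iff_tail_equiv mpt_tail_equiv(1) p p' by blast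
  also have "\<dots> \<longleftrightarrow> tail_equiv ps (fword f p n0) (fword f p' n0)"
    using tail_equiv_cong[OF mpt_tail_equiv(2)[OF p] mpt_tail_equiv(2)[OF p']] .
  also have "\<dots> \<longleftrightarrow> qrel N l \<sigma> J p p'"
    using tail_equiv_fword_nzero_iff[OF words] qrel_iff_common_iterate[OF p'] by blast
  finally show ?thesis .
qed

lemma cyclic_subsystem_eq_LamP:
  assumes "\<Lambda>0 \<subseteq> \<Lambda>" and "BFS N \<Lambda>0 fs" and "cyclic N \<Lambda>0 fs"
  obtains p where "p \<in> QJ N l \<sigma> J" and "\<Lambda>0 = LamP N l \<Lambda> f \<sigma> J p"
proof -
  obtain x0 where "x0 \<in> \<Lambda>0" and "\<Lambda>0 = Aorb N \<Lambda>0 fs x0"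
    using assms(3) unfolding cyclic_def by blast
  then have \<Lambda>0: "\<Lambda>0 = Aorb N \<Lambda> fs x0" and "x0 \<in> \<Lambda>"
    using sig.Aorb_subsystem[OF assms(2,1)] assms(1) by auto
  obtain p where p: "p \<in> QJ N l \<sigma> J" and "tail_equiv ps x0 (fword f p n0)"
    using exists_QJ_tail_equiv[OF \<open>x0 \<in> \<Lambda>\<close>] by blast
  then have "tail_equiv ps x0 (mpt N l \<Lambda> f \<sigma> J p)"
    using mpt_tail_equiv(2)[OF p] tail_equiv_sym tail_equiv_trans by metis
  then have "\<Lambda>0 = LamP N l \<Lambda> f \<sigma> J p"
    unfolding \<Lambda>0 LamP_def using sig.Aorb_eq_iff_tail_equiv[OF \<open>x0 \<in> \<Lambda>\<close> mpt_tail_equiv(1)[OF p]]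
    by blast
  with p show thesis
    using that by blast
qed

end

theorem lemma3p1:
  fixes N l k :: nat and \<sigma> :: "nat list \<Rightarrow> nat list" and J :: "nat list"
    and f :: "nat \<Rightarrow> 'a \<Rightarrow> 'a" and \<Lambda> :: "'a set"
  assumes "N \<ge> 2" and "l \<ge> 2"
    and "bij_betw \<sigma> (words N l) (words N l)"
    and "k \<ge> 1" and "J \<in> words N k" and "nonperiodic J"
    and "BFS N \<Lambda> f" and "isP N \<Lambda> f J"
  shows "(\<forall>\<Lambda>0 T. \<Lambda>0 \<subseteq> \<Lambda> \<and> BFS N \<Lambda>0 (fsig N l \<Lambda> f \<sigma>)
              \<and> T \<noteq> [] \<and> set T \<subseteq> {1..N} \<and> isP N \<Lambda>0 (fsig N l \<Lambda> f \<sigma>) T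
            \<longrightarrow> (\<exists>p\<in>QJ N l \<sigma> J. \<Lambda>0 = LamP N l \<Lambda> f \<sigma> J p))
       \<and> (\<forall>p\<in>QJ N l \<sigma> J. \<forall>p'\<in>QJ N l \<sigma> J.
            qrel N l \<sigma> J p p' \<longleftrightarrow> LamP N l \<Lambda> f \<sigma> J p = LamP N l \<Lambda> f \<sigma> J p')"
proof -
  interpret permuted_P_system N l \<sigma> \<Lambda> f J
    using assms(2,3,5-8) by unfold_locales (auto simp: words_def)
  (* Part (a) only needs the restricted system to be cyclic. *)
  show ?thesis
    using cyclic_subsystem_eq_LamP LamP_eq_iff_qrel unfolding isP_def by metis
qed

end
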